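(* Let $X$ be a first-countable $T_0$ space such that for every $K\in\mathsf{K}(X)$ the set $\min(K)$ of minimal elements of $K$ is countable. Then the Smyth power space $P_S(X)$ is first-countable.
   Context: The specialization order of $X$ is $x\le y$ iff $x\in\overline{\{y\}}$; saturated sets are upper sets in this order. $\mathsf{K}(X)$ is the set of nonempty compact saturated subsets of $X$; $\min(K)$ is the set of minimal elements of $K$ with respect to the specialization order. For open $U\subseteq X$, $\Box U=\{K\in\mathsf{K}(X):K\subseteq U\}$; the Smyth power space $P_S(X)$ is $\mathsf{K}(X)$ with the topology having base $\{\Box U: U\text{ open}\}$ (upper Vietoris topology). *)

theory Defs
  imports "HOL-Analysis.Analysis"
begin

definition spec_le :: "'a topology \<Rightarrow> 'a \<Rightarrow> 'a \<Rightarrow> bool" where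
  "spec_le X x y \<longleftrightarrow> x \<in> topspace X \<and> y \<in> topspace X \<and> x \<in> X closure_of {y}"

definition saturated_in :: "'a topology \<Rightarrow> 'a set \<Rightarrow> bool" where
  "saturated_in X K \<longleftrightarrow> K \<subseteq> topspace X \<and>
     (\<forall>x\<in>K. \<forall>y\<in>topspace X. spec_le X x y \<longrightarrow> y \<in> K)"

definition KX :: "'a topology \<Rightarrow> 'a set set" where
  "KX X = {K. K \<noteq> {} \<and> compactin X K \<and> saturated_in X K}"

definition min_elems :: "'a topology \<Rightarrow> 'a set \<Rightarrow> 'a set" where
  "min_elems X K = {x \<in> K. \<forall>y\<in>K. spec_le X y x \<longrightarrow> y = x}"

definition box :: "'a topology \<Rightarrow> 'a set \<Rightarrow> 'a set set" where
  "box X U = {K \<in> KX X. K \<subseteq> U}"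

definition smyth :: "'a topology \<Rightarrow> 'a set topology" where
  "smyth X = topology_generated_by {box X U | U. openin X U}"

end

theory Submission
  imports Defs
begin

text \<open>A basic open neighbourhood of \<open>K\<close> in the Smyth power space is \<open>\<box>U\<close> for an open
  \<open>U \<supseteq> K\<close>, so it suffices to find a countable family of open sets cofinal among the open
  supersets of \<open>K\<close>. In a T0 space every nonempty compact set has a minimal point (Zorn's lemma,
  with compactness bounding chains), and since open sets are upper sets, an open set containing
  all minimal points of a compact set \<open>K\<close> contains \<open>K\<close>. Hence finite unions of members of
  countable neighbourhood bases at the countably many minimal points of \<open>K\<close> do the job.\<close>

lemma spec_le_iff_closure_of_subset:
  "spec_le X x y \<longleftrightarrow>
     x \<in> topspace X \<and> y \<in> topspace X \<and> X closure_of {x} \<subseteq> X closure_of {y}"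
  unfolding spec_le_def
  by (metis closure_of_minimal closure_of_subset closed_closedin closedin_closure_of
      empty_subsetI insert_subset subsetD)

lemma spec_le_refl: "x \<in> topspace X \<Longrightarrow> spec_le X x x"
  by (simp add: spec_le_iff_closure_of_subset)

lemma spec_le_trans: "spec_le X x y \<Longrightarrow> spec_le X y z \<Longrightarrow> spec_le X x z"
  by (auto simp: spec_le_iff_closure_of_subset)

lemma spec_le_antisym:
  "t0_space X \<Longrightarrow> spec_le X x y \<Longrightarrow> spec_le X y x \<Longrightarrow> x = y"
  by (auto simp: spec_le_iff_closure_of_subset t0_space_closure_of_sing)

lemma openin_spec_le_upward:
  assumes "openin X U" "spec_le X x y" "x \<in> U"
  shows "y \<in> U"
  using assms unfolding spec_le_def in_closure_of by blast

lemma compactin_spec_le_chain_has_lower_bound: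
  assumes C: "compactin X C" "C \<noteq> {}"
    and Ch: "Ch \<subseteq> C" "\<forall>x\<in>Ch. \<forall>y\<in>Ch. spec_le X x y \<or> spec_le X y x"
  shows "\<exists>u\<in>C. \<forall>y\<in>Ch. spec_le X u y"
proof -
  have C_top: "C \<subseteq> topspace X"
    using C(1) compactin_subset_topspace by blast
  define \<U> where "\<U> = (\<lambda>y. X closure_of {y}) ` Ch"
  have "C \<inter> \<Inter>\<U> \<noteq> {}"
  proof (rule C(1)[unfolded compactin_fip, THEN conjunct2, rule_format], intro conjI allI impI)
    show "\<forall>D\<in>\<U>. closedin X D"
      unfolding \<U>_def by auto
    fix \<F> assume \<F>: "finite \<F> \<and> \<F> \<subseteq> \<U>"
    show "C \<inter> \<Inter>\<F> \<noteq> {}"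
    proof (cases "\<F> = {}")
      case True
      then show ?thesis using C(2) by simp
    next
      case False
      have "chain\<^sub>\<subseteq> \<F>"
        unfolding chain_subset_def
      proof (intro ballI)
        fix D E assume "D \<in> \<F>" "E \<in> \<F>"
        then obtain a b where "a \<in> Ch" "b \<in> Ch" "D = X closure_of {a}" "E = X closure_of {b}"
          using \<F> unfolding \<U>_def by blast
        moreover have "spec_le X a b \<or> spec_le X b a"
          using Ch(2) \<open>a \<in> Ch\<close> \<open>b \<in> Ch\<close> by blast
        ultimately show "D \<subseteq> E \<or> E \<subseteq> D"
          unfolding spec_le_iff_closure_of_subset by blast
      qed
      then have "\<Inter>\<F> \<in> \<F>"
        using \<F> False by (intro Inter_in_chain) (auto simp: chain_subset_alt_def)
      then obtain y where "y \<in> Ch" "\<Inter>\<F> = X closure_of {y}"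
        using \<F> unfolding \<U>_def by auto
      moreover have "y \<in> X closure_of {y}"
        using \<open>y \<in> Ch\<close> Ch(1) C_top by (auto intro: closure_of_subset[THEN subsetD])
      ultimately show ?thesis
        using Ch(1) by auto
    qed
  qed
  then obtain u where "u \<in> C" "\<forall>y\<in>Ch. u \<in> X closure_of {y}"
    unfolding \<U>_def by auto
  then show ?thesis
    using Ch(1) C_top by (auto simp: spec_le_def)
qed

lemma min_elems_nonempty:
  assumes "t0_space X" "compactin X C" "C \<noteq> {}"
  shows "min_elems X C \<noteq> {}"
proof -
  have C_top: "C \<subseteq> topspace X"
    using assms(2) compactin_subset_topspace by blast
  let ?ge = "\<lambda>x y. spec_le X y x"
  have "partial_order_on C (relation_of ?ge C)"
    using C_top assms(1)
    by (auto simp: partial_order_on_def preorder_on_def refl_on_def relation_of_def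
        intro: spec_le_refl transI spec_le_trans antisymI spec_le_antisym)
  then obtain m where "m \<in> C" "\<forall>a\<in>C. spec_le X a m \<longrightarrow> a = m"
  proof (rule predicate_Zorn[elim_format])
    fix Ch assume "Ch \<in> Chains (relation_of ?ge C)"
    then have "Ch \<subseteq> C" "\<forall>x\<in>Ch. \<forall>y\<in>Ch. spec_le X x y \<or> spec_le X y x"
      by (auto simp: Chains_def relation_of_def)
    then show "\<exists>u\<in>C. \<forall>a\<in>Ch. ?ge a u"
      using compactin_spec_le_chain_has_lower_bound assms(2,3) by blast
  qed blast
  then show ?thesis
    unfolding min_elems_def by blast
qed

lemma min_elems_diff_openin:
  assumes "openin X G"
  shows "min_elems X (K - G) \<subseteq> min_elems X K"
proof
  fix z assume "z \<in> min_elems X (K - G)"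
  then have z: "z \<in> K" "z \<notin> G" "\<forall>y\<in>K - G. spec_le X y z \<longrightarrow> y = z"
    by (auto simp: min_elems_def)
  have "y = z" if "y \<in> K" "spec_le X y z" for y
    using that z openin_spec_le_upward[OF assms] by blast
  with z show "z \<in> min_elems X K"
    by (auto simp: min_elems_def)
qed

lemma compactin_subset_openin_if_min_elems_subset:
  assumes "t0_space X" "compactin X K" "openin X G" "min_elems X K \<subseteq> G"
  shows "K \<subseteq> G"
proof (rule ccontr)
  assume "\<not> K \<subseteq> G"
  have "K - G = K \<inter> (topspace X - G)"
    using compactin_subset_topspace[OF assms(2)] by blast
  then have "compactin X (K - G)"
    using assms(2,3) by (simp add: compact_Int_closedin closedin_diff)
  moreover have "K - G \<noteq> {}"
    using \<open>\<not> K \<subseteq> G\<close> by blast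
  ultimately obtain z where "z \<in> min_elems X (K - G)"
    using min_elems_nonempty[OF assms(1)] by blast
  moreover have "min_elems X (K - G) \<subseteq> K - G"
    by (auto simp: min_elems_def)
  ultimately show False
    using min_elems_diff_openin[OF assms(3), of K] assms(4) by blast
qed

lemma topspace_smyth: "topspace (smyth X) = KX X"
proof -
  have "\<Union>{box X U | U. openin X U} = box X (topspace X)"
    by (auto simp: box_def dest: openin_subset)
  also have "\<dots> = KX X"
    by (auto simp: box_def KX_def dest: compactin_subset_topspace)
  finally show ?thesis
    by (simp add: smyth_def)
qed

lemma openin_smyth_box: "openin X U \<Longrightarrow> openin (smyth X) (box X U)"
  unfolding smyth_def by (rule topology_generated_by_Basis) blast

lemma openin_smyth_contains_box:
  assumes "openin (smyth X) W" "K \<in> W"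
  shows "\<exists>U. openin X U \<and> K \<in> box X U \<and> box X U \<subseteq> W"
proof -
  have "generate_topology_on {box X U | U. openin X U} W"
    using assms(1) unfolding smyth_def by (simp add: openin_topology_generated_by_iff)
  from this assms(2) show ?thesis
  proof (induction arbitrary: K rule: generate_topology_on.induct)
    case Empty
    then show ?case by simp
  next
    case (Int W1 W2)
    obtain U1 where U1: "openin X U1" "K \<in> box X U1" "box X U1 \<subseteq> W1"
      using Int.IH(1) Int.prems by blast
    obtain U2 where U2: "openin X U2" "K \<in> box X U2" "box X U2 \<subseteq> W2"
      using Int.IH(2) Int.prems by blast
    have "openin X (U1 \<inter> U2)"
      using U1 U2 by (simp add: openin_Int)
    moreover have "K \<in> box X (U1 \<inter> U2)" "box X (U1 \<inter> U2) \<subseteq> W1 \<inter> W2"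
      using U1 U2 unfolding box_def by blast+
    ultimately show ?case
      by blast
  next
    case (UN \<W>)
    then obtain W' where "W' \<in> \<W>" "K \<in> W'"
      by blast
    with UN.IH obtain U where "openin X U" "K \<in> box X U" "box X U \<subseteq> W'"
      by blast
    with \<open>W' \<in> \<W>\<close> show ?case
      by blast
  next
    case (Basis W)
    then obtain U where "W = box X U" "openin X U"
      by blast
    with Basis.prems show ?case
      by blast
  qed
qed

lemma smyth_countable_nhds_base:
  assumes "K \<in> KX X" "countable \<V>" "\<forall>V\<in>\<V>. openin X V"
    and nhds: "\<forall>U. openin X U \<and> K \<subseteq> U \<longrightarrow> (\<exists>V\<in>\<V>. K \<subseteq> V \<and> V \<subseteq> U)"
  shows "\<exists>\<B>. countable \<B> \<and> (\<forall>V\<in>\<B>. openin (smyth X) V) \<and>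
           (\<forall>W. openin (smyth X) W \<and> K \<in> W \<longrightarrow> (\<exists>V\<in>\<B>. K \<in> V \<and> V \<subseteq> W))"
proof (intro exI[of _ "box X ` \<V>"] conjI allI impI)
  show "countable (box X ` \<V>)"
    using assms(2) by simp
  show "\<forall>V\<in>box X ` \<V>. openin (smyth X) V"
    using assms(3) by (simp add: openin_smyth_box)
  fix W assume "openin (smyth X) W \<and> K \<in> W"
  then obtain U where U: "openin X U" "K \<in> box X U" "box X U \<subseteq> W"
    using openin_smyth_contains_box by blast
  then have "K \<subseteq> U"
    by (simp add: box_def)
  with U(1) nhds obtain V where "V \<in> \<V>" "K \<subseteq> V" "V \<subseteq> U"
    by blast
  have "K \<in> box X V"
    using assms(1) \<open>K \<subseteq> V\<close> by (simp add: box_def)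
  moreover have "box X V \<subseteq> box X U"
    using \<open>V \<subseteq> U\<close> by (auto simp: box_def)
  ultimately show "\<exists>V\<in>box X ` \<V>. K \<in> V \<and> V \<subseteq> W"
    using \<open>V \<in> \<V>\<close> U(3) by blast
qed

lemma compactin_countable_nhds_base:
  assumes "first_countable X" "t0_space X" "compactin X K" "countable (min_elems X K)"
  shows "\<exists>\<V>. countable \<V> \<and> (\<forall>V\<in>\<V>. openin X V) \<and>
           (\<forall>U. openin X U \<and> K \<subseteq> U \<longrightarrow> (\<exists>V\<in>\<V>. K \<subseteq> V \<and> V \<subseteq> U))"
proof -
  have "min_elems X K \<subseteq> topspace X"
    using compactin_subset_topspace[OF assms(3)] by (auto simp: min_elems_def)
  then have "\<forall>m\<in>min_elems X K. \<exists>\<B>. countable \<B> \<and> (\<forall>V\<in>\<B>. openin X V) \<and>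
      (\<forall>U. openin X U \<and> m \<in> U \<longrightarrow> (\<exists>V\<in>\<B>. m \<in> V \<and> V \<subseteq> U))"
    using assms(1) unfolding first_countable_def by blast
  then obtain \<N> where \<N>: "\<forall>m\<in>min_elems X K. countable (\<N> m) \<and> (\<forall>V\<in>\<N> m. openin X V) \<and>
      (\<forall>U. openin X U \<and> m \<in> U \<longrightarrow> (\<exists>V\<in>\<N> m. m \<in> V \<and> V \<subseteq> U))"
    by (rule bchoice[elim_format]) blast
  define N where "N = \<Union>(\<N> ` min_elems X K)"
  have "countable N"
    using \<N> assms(4) by (simp add: N_def)
  have N_open: "\<forall>V\<in>N. openin X V"
    using \<N> by (auto simp: N_def)
  show ?thesis
  proof (intro exI[of _ "Union ` {F. finite F \<and> F \<subseteq> N}"] conjI allI impI)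
    show "countable (Union ` {F. finite F \<and> F \<subseteq> N})"
      using countable_Collect_finite_subset[OF \<open>countable N\<close>] by simp
    show "\<forall>V\<in>Union ` {F. finite F \<and> F \<subseteq> N}. openin X V"
      using N_open by blast
    fix U assume U: "openin X U \<and> K \<subseteq> U"
    have "min_elems X K \<subseteq> \<Union>{V\<in>N. V \<subseteq> U}"
    proof
      fix m assume m: "m \<in> min_elems X K"
      then have "m \<in> U"
        using U by (auto simp: min_elems_def)
      then obtain V where "V \<in> \<N> m" "m \<in> V" "V \<subseteq> U"
        using \<N> m U by blast
      with m show "m \<in> \<Union>{V\<in>N. V \<subseteq> U}"
        unfolding N_def by blast
    qed
    moreover have "openin X (\<Union>{V\<in>N. V \<subseteq> U})"
      using N_open by (intro openin_Union) blast
    ultimately have "K \<subseteq> \<Union>{V\<in>N. V \<subseteq> U}"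
      using compactin_subset_openin_if_min_elems_subset[OF assms(2,3)] by blast
    moreover have "\<forall>V\<in>{V\<in>N. V \<subseteq> U}. openin X V"
      using N_open by simp
    ultimately obtain F where "finite F" "F \<subseteq> {V\<in>N. V \<subseteq> U}" "K \<subseteq> \<Union>F"
      using assms(3) unfolding compactin_def by meson
    then show "\<exists>V\<in>Union ` {F. finite F \<and> F \<subseteq> N}. K \<subseteq> V \<and> V \<subseteq> U"
      by blast
  qed
qed

theorem mainTheorem3:
  fixes X :: "'a topology"
  assumes "first_countable X"
    and "t0_space X"
    and "\<forall>K \<in> KX X. countable (min_elems X K)"
  shows "first_countable (smyth X)"
  unfolding first_countable_def topspace_smyth
proof
  fix K assume "K \<in> KX X"
  then have "compactin X K"
    by (simp add: KX_def)
  moreover have "countable (min_elems X K)"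
    using assms(3) \<open>K \<in> KX X\<close> by blast
  ultimately have "\<exists>\<V>. countable \<V> \<and> (\<forall>V\<in>\<V>. openin X V) \<and>
      (\<forall>U. openin X U \<and> K \<subseteq> U \<longrightarrow> (\<exists>V\<in>\<V>. K \<subseteq> V \<and> V \<subseteq> U))"
    by (rule compactin_countable_nhds_base[OF assms(1,2)])
  then obtain \<V> where "countable \<V>" "\<forall>V\<in>\<V>. openin X V"
    "\<forall>U. openin X U \<and> K \<subseteq> U \<longrightarrow> (\<exists>V\<in>\<V>. K \<subseteq> V \<and> V \<subseteq> U)"
    by blast
  then show "\<exists>\<B>. countable \<B> \<and> (\<forall>V\<in>\<B>. openin (smyth X) V) \<and>
      (\<forall>W. openin (smyth X) W \<and> K \<in> W \<longrightarrow> (\<exists>V\<in>\<B>. K \<in> V \<and> V \<subseteq> W))"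
    by (rule smyth_countable_nhds_base[OF \<open>K \<in> KX X\<close>])
qed

end
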